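(* Let $N$ be a finite nonempty set, $p\notin N$ and $N'=N\cup\{p\}$. Let $\mathscr{C}=\{S_1,\dots,S_k\}$ be a minimal balanced collection on $N$ with (unique) balancing weights $(\lambda_{S_i})_{i\in[k]}$, where $[k]=\{1,\dots,k\}$. Let $I\subseteq[k]$ satisfy $\lambda_I:=\sum_{i\in I}\lambda_{S_i}=1$. Then $$\mathscr{C}'=\{S_i\cup\{p\}\mid i\in I\}\cup\{S_i\mid i\in[k]\setminus I\}$$ is a minimal balanced collection on $N'$.
   Context: For $T\subseteq N$, $\mathbf{1}^T\in\mathbb{R}^N$ denotes the characteristic vector of $T$ ($\mathbf{1}^T_i=1$ if $i\in T$, $0$ otherwise). A collection $\mathscr{B}$ of nonempty subsets of a finite set $N$ is balanced if there exist positive weights $(\lambda_S)_{S\in\mathscr{B}}$ (balancing weights) with $\sum_{S\in\mathscr{B}}\lambda_S\mathbf{1}^S=\mathbf{1}^N$. A balanced collection is minimal if it contains no balanced proper subcollection; equivalently, its system of balancing weights is unique. *)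

theory Defs
  imports "HOL-Analysis.Analysis"
begin

definition charvec :: "'a set \<Rightarrow> 'a \<Rightarrow> real" where
  "charvec T = (\<lambda>i. if i \<in> T then 1 else 0)"

definition balancing_weights :: "'a set \<Rightarrow> 'a set set \<Rightarrow> ('a set \<Rightarrow> real) \<Rightarrow> bool" where
  "balancing_weights N B lam \<longleftrightarrow>
     (\<forall>S\<in>B. lam S > 0) \<and>
     (\<forall>i\<in>N. (\<Sum>S\<in>B. lam S * charvec S i) = charvec N i)"

definition balanced :: "'a set \<Rightarrow> 'a set set \<Rightarrow> bool" where
  "balanced N B \<longleftrightarrow> finite B \<and> (\<forall>S\<in>B. S \<noteq> {} \<and> S \<subseteq> N) \<and>
     (\<exists>lam. balancing_weights N B lam)"

definition minimal_balanced :: "'a set \<Rightarrow> 'a set set \<Rightarrow> bool" where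
  "minimal_balanced N B \<longleftrightarrow> balanced N B \<and> (\<forall>B'. B' \<subset> B \<longrightarrow> \<not> balanced N B')"

end

theory Submission
  imports Defs
begin

text \<open>Removing p from the sets of the new collection is a bijection back onto the old
  one which does not change any coordinate in N; so the two collections have the same
  balancing weights on N, and only the new coordinate p has to be checked, where the
  weights of the enlarged sets add up to 1. A balanced proper subcollection of the new
  collection would, after removing p, give one of the old collection.\<close>

lemma balancing_weights_cong:
  assumes "\<And>T. T \<in> B \<Longrightarrow> lam T = mu T"
  shows "balancing_weights N B lam \<longleftrightarrow> balancing_weights N B mu"
  using assms unfolding balancing_weights_def by (simp cong: sum.cong)

lemma balancing_weights_insert:
  "balancing_weights (insert p N) B lam \<longleftrightarrow>
     balancing_weights N B lam \<and> (\<Sum>T\<in>B. lam T * charvec T p) = 1"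
  unfolding balancing_weights_def by (auto simp: charvec_def)

lemma balancing_weights_image:
  assumes "inj_on h B" and "\<And>T. T \<in> B \<Longrightarrow> h T \<inter> N = T \<inter> N"
  shows "balancing_weights N (h ` B) lam \<longleftrightarrow> balancing_weights N B (lam \<circ> h)"
proof -
  have "charvec (h T) x = charvec T x" if "T \<in> B" "x \<in> N" for T x
    using assms(2)[OF that(1)] that(2) unfolding charvec_def by auto
  then show ?thesis
    unfolding balancing_weights_def using assms(1) by (simp add: sum.reindex cong: sum.cong)
qed

lemma balanced_imageI:
  assumes "finite B" and "balancing_weights N B nu" and "inj_on h B"
    and "\<And>T. T \<in> B \<Longrightarrow> h T \<inter> N = T \<inter> N"
    and "\<And>T. T \<in> B \<Longrightarrow> h T \<noteq> {} \<and> h T \<subseteq> N"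
  shows "balanced N (h ` B)"
proof -
  have "balancing_weights N B ((nu \<circ> inv_into B h) \<circ> h)"
    using assms(2) by (subst balancing_weights_cong[where mu = nu]) (simp_all add: assms(3))
  then have "balancing_weights N (h ` B) (nu \<circ> inv_into B h)"
    using balancing_weights_image[OF assms(3,4)] by blast
  then show ?thesis
    unfolding balanced_def using assms(1,5) by blast
qed

lemma minimal_balanced_insert:
  assumes min: "minimal_balanced N C" and lam: "balancing_weights N C lam"
    and "A \<subseteq> C" and lam_A: "(\<Sum>T\<in>A. lam T) = 1" and "p \<notin> N"
  shows "minimal_balanced (insert p N) (insert p ` A \<union> (C - A))"
proof -
  define lift where "lift T = (if T \<in> A then insert p T else T)" for T
  define drop where "drop T = T - {p}" for T
  have bal: "balanced N C"
    using min unfolding minimal_balanced_def by blast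
  then have C: "finite C" "\<And>T. T \<in> C \<Longrightarrow> T \<noteq> {} \<and> T \<subseteq> N"
    unfolding balanced_def by blast+
  have p_notin: "p \<notin> T" if "T \<in> C" for T
    using C(2)[OF that] \<open>p \<notin> N\<close> by blast
  have drop_lift: "drop (lift T) = T" if "T \<in> C" for T
    using p_notin[OF that] unfolding drop_def lift_def by auto
  have C': "insert p ` A \<union> (C - A) = lift ` C"
    using \<open>A \<subseteq> C\<close> unfolding lift_def by auto
  have inj_lift: "inj_on lift C"
    by (metis drop_lift inj_onI)
  have drop_C': "drop ` lift ` C = C"
    by (simp add: image_image drop_lift cong: image_cong)
  have inj_drop: "inj_on drop (lift ` C)"
    by (rule inj_onI) (auto simp: drop_lift)
  have drop_trace: "drop T \<inter> N = T \<inter> N" for T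
    using \<open>p \<notin> N\<close> unfolding drop_def by blast
  have "balancing_weights (insert p N) (lift ` C) (lam \<circ> drop)"
    unfolding balancing_weights_insert
  proof
    show "balancing_weights N (lift ` C) (lam \<circ> drop)"
      using lam balancing_weights_image[OF inj_drop drop_trace] drop_C' by simp
    have "(\<Sum>T\<in>lift ` C. (lam \<circ> drop) T * charvec T p) = (\<Sum>T\<in>C. lam T * charvec (lift T) p)"
      by (simp add: sum.reindex[OF inj_lift] drop_lift cong: sum.cong)
    also have "\<dots> = (\<Sum>T\<in>C. if T \<in> A then lam T else 0)"
      by (rule sum.cong) (auto simp: charvec_def lift_def p_notin)
    also have "\<dots> = (\<Sum>T\<in>A. lam T)"
      using \<open>A \<subseteq> C\<close> C(1) by (simp add: sum.If_cases Int_absorb1)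
    finally show "(\<Sum>T\<in>lift ` C. (lam \<circ> drop) T * charvec T p) = 1"
      using lam_A by simp
  qed
  then have "balanced (insert p N) (lift ` C)"
    using C unfolding balanced_def lift_def by auto
  moreover have "\<not> balanced (insert p N) B" if B: "B \<subset> lift ` C" for B
  proof
    assume "balanced (insert p N) B"
    then obtain nu where "finite B" "balancing_weights N B nu"
      unfolding balanced_def balancing_weights_insert by blast
    moreover have "inj_on drop B"
      using inj_drop B inj_on_subset by blast
    moreover have "drop T \<noteq> {} \<and> drop T \<subseteq> N" if "T \<in> B" for T
      using that B C(2) drop_C' by blast
    ultimately have "balanced N (drop ` B)"
      using balanced_imageI drop_trace by blast
    moreover have "drop ` B \<subset> C"
      using B inj_drop drop_C' by (metis image_strict_mono)
    ultimately show False
      using min unfolding minimal_balanced_def by blast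
  qed
  ultimately show ?thesis
    unfolding C' minimal_balanced_def by blast
qed

theorem lemma4p1:
  fixes N :: "'a set" and p :: 'a and k :: nat and S :: "nat \<Rightarrow> 'a set"
    and lam :: "'a set \<Rightarrow> real" and I :: "nat set"
  assumes "finite N" and "N \<noteq> {}" and "p \<notin> N"
    and "inj_on S {1..k}"
    and "minimal_balanced N (S ` {1..k})"
    and "balancing_weights N (S ` {1..k}) lam"
    and "I \<subseteq> {1..k}"
    and "(\<Sum>i\<in>I. lam (S i)) = 1"
  shows "minimal_balanced (N \<union> {p})
           ((\<lambda>i. S i \<union> {p}) ` I \<union> S ` ({1..k} - I))"
proof -
  have "(\<Sum>T\<in>S ` I. lam T) = 1"
    using assms(4,7,8) by (simp add: sum.reindex inj_on_subset)
  then have "minimal_balanced (insert p N) (insert p ` S ` I \<union> (S ` {1..k} - S ` I))"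
    using minimal_balanced_insert assms(3,5,6,7) by (meson image_mono)
  moreover have "S ` ({1..k} - I) = S ` {1..k} - S ` I"
    using assms(4,7) by (simp add: inj_on_image_set_diff)
  ultimately show ?thesis
    by (simp add: image_image)
qed

end
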